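(* Let $\mathcal X,\mathcal Y$ be nonempty convex compact sets and $\mathcal L:\mathcal X\times\mathcal Y\to\mathbb R$ a differentiable, uniformly strongly convex-concave function with saddle point $(x^*,y^* )$ and finite curvature constant $C_{\mathcal L}$ and finite $M_{\mathcal L}$. Let $z^{(t)}$ be a current iterate and, for a direction $d^{(t)}$ and step $\gamma$, let $w_\gamma:=w(z^{(t)}+\gamma d^{(t)})$ and $w_t:=w(z^{(t)})$. (I) If $(x^*,y^* )$ lies in the relative interior of $\mathcal X\times\mathcal Y$, $\mu^{int}_{\mathcal L}>0$, and $d^{(t)}=d^{(t)}_{FW}$ is the FW direction, then for any $\gamma\in[0,1]$, $$w_\gamma\le w_t-\nu^{FW}\gamma g_t^{FW}+\gamma^2C_{\mathcal L},\qquad\nu^{FW}:=1-\frac{M_{\mathcal L}}{\sqrt{\mu^{int}_{\mathcal L}}}.$$ (P) If $\mathcal X=\mathrm{conv}(\mathcal A)$, $\mathcal Y=\mathrm{conv}(\mathcal B)$ with $\mathcal A,\mathcal B$ finite, $\mu^A_{\mathcal L}>0$, and $d^{(t)}$ is the direction chosen by a step of SP-AFW at $z^{(t)}$, then for any $\gamma\in[0,\gamma_{\max}]$, $$w_\gamma\le w_t-\nu^{PFW}\gamma g_t^{PFW}+\gamma^2C_{\mathcal L},\qquad\nu^{PFW}:=\frac12-\frac{M_{\mathcal L}}{\sqrt{\mu^A_{\mathcal L}}}.$$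
   Context: Convex-concave: $\mathcal L(\cdot,y)$ convex, $\mathcal L(x,\cdot)$ concave. Uniformly strongly convex-concave: there are $\mu_{\mathcal X},\mu_{\mathcal Y}>0$ with $\mathcal L(\cdot,y)$ $\mu_{\mathcal X}$-strongly convex for every $y$ and $-\mathcal L(x,\cdot)$ $\mu_{\mathcal Y}$-strongly convex for every $x$. Saddle point: $\mathcal L(x^*,y)\le\mathcal L(x^*,y^* )\le\mathcal L(x,y^* )$ for all $x,y$; $\mathcal L^*:=\mathcal L(x^*,y^* )$. For $z=(x,y)$: $r(z):=(\nabla_x\mathcal L(z),-\nabla_y\mathcal L(z))$, $w(z):=\mathcal L(x,y^* )-\mathcal L(x^*,y)$. With $r^{(t)}:=r(z^{(t)})$, $s^{(t)}\in\arg\min_{s\in\mathcal X\times\mathcal Y}\langle s,r^{(t)}\rangle$, $d^{(t)}_{FW}:=s^{(t)}-z^{(t)}$, $g_t^{FW}:=\langle-r^{(t)},d_{FW}^{(t)}\rangle$. SP-AFW step at $z^{(t)}$: $z^{(t)}$ is given with active sets $S_x^{(t)}\subseteq\mathcal A$, $S_y^{(t)}\subseteq\mathcal B$ and positive weights $\alpha$ summing to one on each, $x^{(t)}=\sum_{v\in S_x^{(t)}}\alpha_vv$, $y^{(t)}=\sum_{v\in S_y^{(t)}}\alpha_vv$. Let $v^{(t)}=(v_x^{(t)},v_y^{(t)})\in\arg\max_{v\in S_x^{(t)}\times S_y^{(t)}}\langle r^{(t)},v\rangle$, $d^{(t)}_A:=z^{(t)}-v^{(t)}$; if $\langle-r^{(t)},d^{(t)}_{FW}\rangle\ge\langle-r^{(t)},d^{(t)}_A\rangle$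 then $d^{(t)}:=d^{(t)}_{FW}$, $\gamma_{\max}:=1$; else $d^{(t)}:=d^{(t)}_A$, $\gamma_{\max}:=\min\{\frac{\alpha_{v_x^{(t)}}}{1-\alpha_{v_x^{(t)}}},\frac{\alpha_{v_y^{(t)}}}{1-\alpha_{v_y^{(t)}}}\}$. $g_t^{PFW}:=\langle-r^{(t)},d^{(t)}_{FW}+d^{(t)}_A\rangle$. Constants. $\mathcal F:=\{\mathcal L(\cdot,y):y\in\mathcal Y\}$, $\mathcal G:=\{-\mathcal L(x,\cdot):x\in\mathcal X\}$. Curvature: $C_f:=\sup\frac2{\gamma^2}(f(x+\gamma(s-v))-f(x)-\gamma\langle s-v,\nabla f(x)\rangle)$ over $x,s,v$ in the domain, $\gamma>0$ with $x+\gamma(s-v)$ in the domain; $C_{\mathcal L}:=\frac12(\sup_{f\in\mathcal F}C_f+\sup_{g\in\mathcal G}C_g)$. Interior strong convexity of $f$ on $\mathcal K$ w.r.t. $x_c$ in its relative interior: $\mu_f^{x_c}:=\inf\frac2{\gamma^2}(f(u)-f(x)-\langle u-x,\nabla f(x)\rangle)$ over $x\in\mathcal K\setminus\{x_c\}$, $\gamma\in(0,1]$, $u=x+\gamma(s-x)$ where $s$ is where the ray from $x$ through $x_c$ meets the relative boundary of $\mathcal K$; $\mu^{int}_{\mathcal L}:=\min\{\inf_{f\in\mathcal F}\mu_f^{x^*},\inf_{g\in\mathcal G}\mu_g^{y^*}\}$. Geometric strong convexity of $f$ on $\mathcal K=\mathrm{conv}(\mathcal A)$: for $x\in\mathcal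 K$, $\mathcal S_x$ = family of $S\subseteq\mathcal A$ such that $x$ is a convex combination of all elements of $S$ with positive coefficients, $v_S(x)\in\arg\max_{v\in S}\langle\nabla f(x),v\rangle$, $v_f(x)\in\arg\min\{\langle\nabla f(x),v\rangle:v=v_S(x),S\in\mathcal S_x\}$, $s_f(x)\in\arg\min_{v\in\mathcal A}\langle\nabla f(x),v\rangle$, $\gamma^A(x,x'):=\frac{\langle-\nabla f(x),x'-x\rangle}{\langle-\nabla f(x),s_f(x)-v_f(x)\rangle}$, $\mu^A_f:=\inf_{x\in\mathcal K}\inf_{x':\langle\nabla f(x),x'-x\rangle<0}\frac2{\gamma^A(x,x')^2}(f(x')-f(x)-\langle x'-x,\nabla f(x)\rangle)$; $\mu^A_{\mathcal L}:=\min\{\inf_{f\in\mathcal F}\mu^A_f\text{ (over }\mathcal A),\inf_{g\in\mathcal G}\mu^A_g\text{ (over }\mathcal B)\}$. Bilinearity: $M_{XY}:=\sup\langle s-v,\frac{\nabla_x\mathcal L(x,y^* )-\nabla_x\mathcal L(x,y)}{\sqrt{\mathcal L^*-\mathcal L(x^*,y)}}\rangle$ over $y\ne y^*$, $x,s,v\in\mathcal X$; $M_{YX}:=\sup\langle s-v,\frac{\nabla_y\mathcal L(x,y)-\nabla_y\mathcal L(x^*,y)}{\sqrt{\mathcal L(x,y^* )-\mathcal L^*}}\rangle$ over $x\ne x^*$, $y,s,v\in\mathcal Y$; $M_{\mathcal L}:=\max\{M_{XY},M_{YX}\}$. *)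

theory Defs
  imports "HOL-Analysis.Analysis" "HOL-Library.Extended_Real"
begin

definition sconvex_on :: "real \<Rightarrow> 'a::real_normed_vector set \<Rightarrow> ('a \<Rightarrow> real) \<Rightarrow> bool" where
  "sconvex_on \<mu> K f \<longleftrightarrow>
     (\<forall>x\<in>K. \<forall>u\<in>K. \<forall>t\<in>{0..1}.
        f ((1 - t) *\<^sub>R x + t *\<^sub>R u) \<le> (1 - t) * f x + t * f u - \<mu> / 2 * t * (1 - t) * (norm (x - u))\<^sup>2)"

definition is_saddle :: "'a set \<Rightarrow> 'b set \<Rightarrow> ('a \<Rightarrow> 'b \<Rightarrow> real) \<Rightarrow> 'a \<Rightarrow> 'b \<Rightarrow> bool" where
  "is_saddle X Y L xs ys \<longleftrightarrow> xs \<in> X \<and> ys \<in> Y \<and>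
     (\<forall>x\<in>X. \<forall>y\<in>Y. L xs y \<le> L xs ys \<and> L xs ys \<le> L x ys)"

definition rvec :: "('a \<Rightarrow> 'b \<Rightarrow> 'a) \<Rightarrow> ('a \<Rightarrow> 'b \<Rightarrow> 'b::uminus) \<Rightarrow> 'a \<times> 'b \<Rightarrow> 'a \<times> 'b" where
  "rvec gx gy z = (gx (fst z) (snd z), - gy (fst z) (snd z))"

definition wgap :: "('a \<Rightarrow> 'b \<Rightarrow> real) \<Rightarrow> 'a \<Rightarrow> 'b \<Rightarrow> 'a \<times> 'b \<Rightarrow> real" where
  "wgap L xs ys z = L (fst z) ys - L xs (snd z)"

definition curv_set :: "'a::real_inner set \<Rightarrow> ('a \<Rightarrow> real) \<Rightarrow> ('a \<Rightarrow> 'a) \<Rightarrow> real set" where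
  "curv_set D f df =
     {2 / \<gamma>\<^sup>2 * (f (x + \<gamma> *\<^sub>R (s - v)) - f x - \<gamma> * ((s - v) \<bullet> df x)) | x s v \<gamma>.
        x \<in> D \<and> s \<in> D \<and> v \<in> D \<and> \<gamma> > 0 \<and> x + \<gamma> *\<^sub>R (s - v) \<in> D}"

definition curv :: "'a::real_inner set \<Rightarrow> ('a \<Rightarrow> real) \<Rightarrow> ('a \<Rightarrow> 'a) \<Rightarrow> ereal" where
  "curv D f df = Sup (ereal ` curv_set D f df)"

definition C_L :: "'a::real_inner set \<Rightarrow> 'b::real_inner set \<Rightarrow> ('a \<Rightarrow> 'b \<Rightarrow> real)
                   \<Rightarrow> ('a \<Rightarrow> 'b \<Rightarrow> 'a) \<Rightarrow> ('a \<Rightarrow> 'b \<Rightarrow> 'b) \<Rightarrow> ereal" where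
  "C_L X Y L gx gy =
     (Sup ((\<lambda>y. curv X (\<lambda>x. L x y) (\<lambda>x. gx x y)) ` Y)
      + Sup ((\<lambda>x. curv Y (\<lambda>y. - L x y) (\<lambda>y. - gy x y)) ` X)) / 2"

definition ray_exit :: "'a::euclidean_space set \<Rightarrow> 'a \<Rightarrow> 'a \<Rightarrow> 'a" where
  "ray_exit K x xc = (THE s. s \<in> rel_frontier K \<and> (\<exists>l>1. s = x + l *\<^sub>R (xc - x)))"

definition mu_int_f :: "'a::euclidean_space set \<Rightarrow> ('a \<Rightarrow> real) \<Rightarrow> ('a \<Rightarrow> 'a) \<Rightarrow> 'a \<Rightarrow> ereal" where
  "mu_int_f K f df xc = Inf (ereal `
     {2 / \<gamma>\<^sup>2 * (f u - f x - (u - x) \<bullet> df x) | x \<gamma> u.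
        x \<in> K - {xc} \<and> 0 < \<gamma> \<and> \<gamma> \<le> 1 \<and> u = x + \<gamma> *\<^sub>R (ray_exit K x xc - x)})"

definition mu_int_L :: "'a::euclidean_space set \<Rightarrow> 'b::euclidean_space set \<Rightarrow> ('a \<Rightarrow> 'b \<Rightarrow> real)
                   \<Rightarrow> ('a \<Rightarrow> 'b \<Rightarrow> 'a) \<Rightarrow> ('a \<Rightarrow> 'b \<Rightarrow> 'b) \<Rightarrow> 'a \<Rightarrow> 'b \<Rightarrow> ereal" where
  "mu_int_L X Y L gx gy xs ys =
     min (INF y\<in>Y. mu_int_f X (\<lambda>x. L x y) (\<lambda>x. gx x y) xs)
         (INF x\<in>X. mu_int_f Y (\<lambda>y. - L x y) (\<lambda>y. - gy x y) ys)"

definition active_fams :: "'a::real_vector set \<Rightarrow> 'a \<Rightarrow> 'a set set" where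
  "active_fams A x = {S. S \<subseteq> A \<and> (\<exists>\<alpha>. (\<forall>v\<in>S. \<alpha> v > 0) \<and> sum \<alpha> S = 1 \<and> (\<Sum>v\<in>S. \<alpha> v *\<^sub>R v) = x)}"

definition v_S :: "'a::real_inner \<Rightarrow> 'a set \<Rightarrow> 'a" where
  "v_S g S = (SOME v. v \<in> S \<and> (\<forall>u\<in>S. g \<bullet> u \<le> g \<bullet> v))"

definition v_f :: "'a::real_inner set \<Rightarrow> 'a \<Rightarrow> 'a \<Rightarrow> 'a" where
  "v_f A g x = (SOME v. (\<exists>S\<in>active_fams A x. v = v_S g S) \<and>
                  (\<forall>S\<in>active_fams A x. g \<bullet> v \<le> g \<bullet> v_S g S))"

definition s_f :: "'a::real_inner set \<Rightarrow> 'a \<Rightarrow> 'a" where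
  "s_f A g = (SOME s. s \<in> A \<and> (\<forall>v\<in>A. g \<bullet> s \<le> g \<bullet> v))"

definition gamma_A :: "'a::real_inner set \<Rightarrow> ('a \<Rightarrow> 'a) \<Rightarrow> 'a \<Rightarrow> 'a \<Rightarrow> real" where
  "gamma_A A df x x' = ((- df x) \<bullet> (x' - x)) / ((- df x) \<bullet> (s_f A (df x) - v_f A (df x) x))"

definition mu_A_f :: "'a::real_inner set \<Rightarrow> ('a \<Rightarrow> real) \<Rightarrow> ('a \<Rightarrow> 'a) \<Rightarrow> ereal" where
  "mu_A_f A f df = Inf (ereal `
     {2 / (gamma_A A df x x')\<^sup>2 * (f x' - f x - (x' - x) \<bullet> df x) | x x'.
        x \<in> convex hull A \<and> x' \<in> convex hull A \<and> df x \<bullet> (x' - x) < 0})"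

definition mu_A_L :: "'a::real_inner set \<Rightarrow> 'b::real_inner set \<Rightarrow> ('a \<Rightarrow> 'b \<Rightarrow> real)
                   \<Rightarrow> ('a \<Rightarrow> 'b \<Rightarrow> 'a) \<Rightarrow> ('a \<Rightarrow> 'b \<Rightarrow> 'b) \<Rightarrow> ereal" where
  "mu_A_L A B L gx gy =
     min (INF y\<in>convex hull B. mu_A_f A (\<lambda>x. L x y) (\<lambda>x. gx x y))
         (INF x\<in>convex hull A. mu_A_f B (\<lambda>y. - L x y) (\<lambda>y. - gy x y))"

definition M_XY :: "'a::real_inner set \<Rightarrow> 'b set \<Rightarrow> ('a \<Rightarrow> 'b \<Rightarrow> real) \<Rightarrow> ('a \<Rightarrow> 'b \<Rightarrow> 'a) \<Rightarrow> 'a \<Rightarrow> 'b \<Rightarrow> ereal" where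
  "M_XY X Y L gx xs ys = Sup (ereal `
     {(s - v) \<bullet> ((gx x ys - gx x y) /\<^sub>R sqrt (L xs ys - L xs y)) | x y s v.
        y \<in> Y \<and> y \<noteq> ys \<and> x \<in> X \<and> s \<in> X \<and> v \<in> X})"

definition M_YX :: "'a set \<Rightarrow> 'b::real_inner set \<Rightarrow> ('a \<Rightarrow> 'b \<Rightarrow> real) \<Rightarrow> ('a \<Rightarrow> 'b \<Rightarrow> 'b) \<Rightarrow> 'a \<Rightarrow> 'b \<Rightarrow> ereal" where
  "M_YX X Y L gy xs ys = Sup (ereal `
     {(s - v) \<bullet> ((gy x y - gy xs y) /\<^sub>R sqrt (L x ys - L xs ys)) | x y s v.
        x \<in> X \<and> x \<noteq> xs \<and> y \<in> Y \<and> s \<in> Y \<and> v \<in> Y})"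

definition M_L :: "'a::real_inner set \<Rightarrow> 'b::real_inner set \<Rightarrow> ('a \<Rightarrow> 'b \<Rightarrow> real)
                   \<Rightarrow> ('a \<Rightarrow> 'b \<Rightarrow> 'a) \<Rightarrow> ('a \<Rightarrow> 'b \<Rightarrow> 'b) \<Rightarrow> 'a \<Rightarrow> 'b \<Rightarrow> ereal" where
  "M_L X Y L gx gy xs ys = max (M_XY X Y L gx xs ys) (M_YX X Y L gy xs ys)"

text \<open>nu = c - M / sqrt mu, with the convention M / sqrt(+infinity) = 0.\<close>
definition nu_coef :: "real \<Rightarrow> ereal \<Rightarrow> ereal \<Rightarrow> real" where
  "nu_coef c M \<mu> = c - (if \<mu> = \<infinity> then 0 else real_of_ereal M / sqrt (real_of_ereal \<mu>))"

end

theory Submission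
  imports Defs
begin

text \<open>
  Write w(z) = h_x + h_y with h_x = L(x,y*) - L* and h_y = L* - L(x*,y). The curvature constant
  bounds both halves of w along a step z + \<gamma> d to second order; the first-order term is
  -\<gamma> <r(z), d> up to the error of evaluating the partial gradients at (x,y*) and (x*,y) instead
  of at z, and by definition of M_L that error is at most \<gamma> M_L (sqrt h_x + sqrt h_y).
  Interior (resp. geometric) strong convexity bounds L(x,y) - L(x*,y) and L(x,y*) - L(x,y),
  which add up to w(z), by G_x^2/(2\<mu>) and G_y^2/(2\<mu>), where G_x + G_y is the FW gap
  (resp. the pairwise FW gap). Hence sqrt h_x + sqrt h_y \<le> (G_x + G_y)/sqrt \<mu>, and the error
  is absorbed into the linear decrease at the price M_L/sqrt \<mu>. The direction chosen by SP-AFW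
  carries at least half of the pairwise gap, whence the constant 1/2.
\<close>

lemma inner_convex_comb_le:
  fixes a :: "'a::real_inner"
  assumes "\<forall>v\<in>S. \<alpha> v > 0" "sum \<alpha> S = 1" "\<forall>v\<in>S. a \<bullet> v \<le> c"
  shows "a \<bullet> (\<Sum>v\<in>S. \<alpha> v *\<^sub>R v) \<le> c"
proof -
  have "a \<bullet> (\<Sum>v\<in>S. \<alpha> v *\<^sub>R v) = (\<Sum>v\<in>S. \<alpha> v * (a \<bullet> v))"
    by (simp add: inner_sum_right)
  also have "\<dots> \<le> (\<Sum>v\<in>S. \<alpha> v * c)"
    using assms by (intro sum_mono mult_left_mono) auto
  also have "\<dots> = c"
    using assms(2) by (simp add: sum_distrib_right[symmetric])
  finally show ?thesis .
qed

lemma sconvex_on_imp_convex_on: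
  assumes "sconvex_on \<mu> K f" "0 \<le> \<mu>" "convex K"
  shows "convex_on K f"
proof (rule convex_onI)
  fix t :: real and x y assume t: "0 < t" "t < 1" and xy: "x \<in> K" "y \<in> K"
  have "f ((1 - t) *\<^sub>R x + t *\<^sub>R y)
      \<le> (1 - t) * f x + t * f y - \<mu> / 2 * t * (1 - t) * (norm (x - y))\<^sup>2"
    using assms(1) t xy unfolding sconvex_on_def by auto
  moreover have "0 \<le> \<mu> / 2 * t * (1 - t) * (norm (x - y))\<^sup>2"
    using assms(2) t by simp
  ultimately show "f ((1 - t) *\<^sub>R x + t *\<^sub>R y) \<le> (1 - t) * f x + t * f y"
    by linarith
qed (fact assms(3))

lemma sconvex_on_argmin_strict:
  assumes sc: "sconvex_on \<mu> K f" and "0 < \<mu>" "convex K" "xo \<in> K"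
    and min: "\<forall>z\<in>K. f xo \<le> f z" and x: "x \<in> K" "x \<noteq> xo"
  shows "f xo < f x"
proof -
  let ?m = "(1 - 1/2) *\<^sub>R x + (1/2::real) *\<^sub>R xo"
  have "f ?m \<le> (1 - 1/2) * f x + 1/2 * f xo - \<mu> / 2 * (1/2) * (1 - 1/2) * (norm (x - xo))\<^sup>2"
    using sc x(1) \<open>xo \<in> K\<close> unfolding sconvex_on_def
    by (elim ballE[where x = x] ballE[where x = xo] ballE[where x = "1/2"]) auto
  moreover have "f xo \<le> f ?m"
    using min convexD[OF \<open>convex K\<close> x(1) \<open>xo \<in> K\<close>] by simp
  moreover have "0 < \<mu> / 2 * (1/2) * (1 - 1/2) * (norm (x - xo))\<^sup>2"
    using \<open>0 < \<mu>\<close> x(2) by simp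
  moreover have "(1 - 1/2) * f x + 1/2 * f xo = f x / 2 + f xo / 2"
    by simp
  ultimately show ?thesis by linarith
qed

lemma convex_on_above_tangent:
  fixes f :: "'a::real_normed_vector \<Rightarrow> real"
  assumes cvx: "convex_on K f" and "x \<in> K" "y \<in> K" and der: "(f has_derivative D) (at x)"
  shows "D (y - x) \<le> f y - f x"
proof -
  define \<phi> where "\<phi> = (\<lambda>t::real. f (x + t *\<^sub>R (y - x)))"
  have "((\<lambda>t::real. x + t *\<^sub>R (y - x)) has_derivative (\<lambda>t. t *\<^sub>R (y - x))) (at 0)"
    by (auto intro!: derivative_eq_intros)
  from diff_chain_at[OF this, of f D] der
  have "(\<phi> has_derivative (\<lambda>t. t * D (y - x))) (at 0)"
    by (simp add: \<phi>_def o_def linear_scale[OF has_derivative_linear[OF der]])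
  then have "(\<phi> has_field_derivative D (y - x)) (at 0)"
    unfolding has_field_derivative_def by (rule has_derivative_eq_rhs) (simp add: fun_eq_iff)
  then have "((\<lambda>t. (\<phi> t - \<phi> 0) / (t - 0)) \<longlongrightarrow> D (y - x)) (at 0)"
    by (simp add: has_field_derivative_iff)
  then have lim: "((\<lambda>t. (\<phi> t - \<phi> 0) / (t - 0)) \<longlongrightarrow> D (y - x)) (at_right 0)"
    by (rule tendsto_mono[rotated]) (simp add: at_le)
  have "eventually (\<lambda>t. (\<phi> t - \<phi> 0) / (t - 0) \<le> f y - f x) (at_right 0)"
  proof (rule eventually_at_rightI[of 0 1])
    fix t :: real assume t: "t \<in> {0<..<1}"
    have "\<phi> t = f ((1 - t) *\<^sub>R x + t *\<^sub>R y)"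
      by (simp add: \<phi>_def algebra_simps)
    also have "\<dots> \<le> (1 - t) * f x + t * f y"
      using convex_onD[OF cvx] t \<open>x \<in> K\<close> \<open>y \<in> K\<close> by simp
    finally have "\<phi> t - \<phi> 0 \<le> t * (f y - f x)"
      by (simp add: \<phi>_def algebra_simps)
    then show "(\<phi> t - \<phi> 0) / (t - 0) \<le> f y - f x"
      using t by (simp add: divide_le_eq mult.commute)
  qed simp
  then show ?thesis
    using tendsto_upperbound[OF lim] by simp
qed

lemma curv_nonneg:
  assumes "x \<in> D"
  shows "0 \<le> curv D f df"
proof -
  have "2 / 1\<^sup>2 * (f (x + 1 *\<^sub>R (x - x)) - f x - 1 * ((x - x) \<bullet> df x)) \<in> curv_set D f df"
    unfolding curv_set_def using assms by (intro CollectI exI[of _ x] exI[of _ "1::real"]) simp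
  then have "ereal 0 \<le> curv D f df"
    unfolding curv_def by (intro Sup_upper) (simp add: rev_image_eqI)
  then show ?thesis by (simp add: zero_ereal_def)
qed

lemma curv_bound:
  assumes "x \<in> D" "s \<in> D" "v \<in> D" "0 \<le> \<gamma>" "x + \<gamma> *\<^sub>R (s - v) \<in> D"
    and "curv D f df \<le> ereal c"
  shows "f (x + \<gamma> *\<^sub>R (s - v)) - f x - \<gamma> * ((s - v) \<bullet> df x) \<le> \<gamma>\<^sup>2 / 2 * c"
proof (cases "\<gamma> = 0")
  case True
  then show ?thesis
    using curv_nonneg[OF \<open>x \<in> D\<close>, of f df] assms(6) by (simp add: zero_ereal_def)
next
  case False
  with assms(4) have "0 < \<gamma>" by simp
  then have "2 / \<gamma>\<^sup>2 * (f (x + \<gamma> *\<^sub>R (s - v)) - f x - \<gamma> * ((s - v) \<bullet> df x)) \<in> curv_set D f df"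
    unfolding curv_set_def using assms by blast
  then have "ereal (2 / \<gamma>\<^sup>2 * (f (x + \<gamma> *\<^sub>R (s - v)) - f x - \<gamma> * ((s - v) \<bullet> df x))) \<le> curv D f df"
    unfolding curv_def by (intro Sup_upper imageI)
  then have "2 / \<gamma>\<^sup>2 * (f (x + \<gamma> *\<^sub>R (s - v)) - f x - \<gamma> * ((s - v) \<bullet> df x)) \<le> c"
    using order_trans[OF _ assms(6)] by (metis ereal_less_eq(3))
  then show ?thesis
    using \<open>0 < \<gamma>\<close> by (simp add: field_simps)
qed

text \<open>After the away step the weight of u is (1 + \<gamma>) \<alpha> u - \<gamma>, which is nonnegative exactly
  up to the SP-AFW bound on \<gamma>.\<close>
lemma convex_hull_away_step:
  fixes x :: "'a::real_vector"
  assumes pos: "\<forall>v\<in>S. \<alpha> v > 0" and sum1: "sum \<alpha> S = 1" and x: "x = (\<Sum>v\<in>S. \<alpha> v *\<^sub>R v)"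
    and "u \<in> S" "0 \<le> \<gamma>" and step: "\<alpha> u < 1 \<longrightarrow> \<gamma> \<le> \<alpha> u / (1 - \<alpha> u)"
  shows "x + \<gamma> *\<^sub>R (x - u) \<in> convex hull S"
proof -
  have fin: "finite S"
    using sum1 by (metis sum.infinite zero_neq_one)
  define \<beta> where "\<beta> v = (1 + \<gamma>) * \<alpha> v - (if v = u then \<gamma> else 0)" for v
  have "0 \<le> \<beta> u"
  proof (cases "\<alpha> u < 1")
    case True
    then have "\<gamma> * (1 - \<alpha> u) \<le> \<alpha> u"
      using step by (simp add: le_divide_eq)
    then show ?thesis
      by (simp add: \<beta>_def algebra_simps)
  next
    case False
    then have "0 \<le> \<alpha> u + \<gamma> * (\<alpha> u - 1)"
      using \<open>0 \<le> \<gamma>\<close> by simp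
    then show ?thesis
      by (simp add: \<beta>_def algebra_simps)
  qed
  then have "\<forall>v\<in>S. 0 \<le> \<beta> v"
    using pos \<open>0 \<le> \<gamma>\<close> by (auto simp: \<beta>_def less_imp_le)
  moreover have "sum \<beta> S = 1"
    unfolding \<beta>_def using fin \<open>u \<in> S\<close> sum1
    by (simp add: sum_subtractf sum_distrib_left[symmetric] del: sum.distrib)
  moreover have "(\<Sum>v\<in>S. \<beta> v *\<^sub>R v) = x + \<gamma> *\<^sub>R (x - u)"
  proof -
    have "(\<Sum>v\<in>S. \<beta> v *\<^sub>R v)
        = (\<Sum>v\<in>S. (1 + \<gamma>) *\<^sub>R (\<alpha> v *\<^sub>R v) - (if v = u then \<gamma> *\<^sub>R v else 0))"
      unfolding \<beta>_def by (intro sum.cong) (auto simp: algebra_simps)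
    also have "\<dots> = (1 + \<gamma>) *\<^sub>R x - \<gamma> *\<^sub>R u"
      using fin \<open>u \<in> S\<close> by (simp add: sum_subtractf x scaleR_sum_right)
    finally show ?thesis
      by (simp add: algebra_simps)
  qed
  ultimately show ?thesis
    using fin by (auto simp: convex_hull_finite)
qed

lemma rel_frontier_ray_unique:
  fixes K :: "'a::euclidean_space set"
  assumes "convex K" "c \<in> rel_interior K" "l \<noteq> 0" "0 < d" "0 < e"
    and "c + d *\<^sub>R l \<in> rel_frontier K" "c + e *\<^sub>R l \<in> rel_frontier K"
  shows "d = e"
proof -
  have False if "0 < a" "a < b" "c + a *\<^sub>R l \<in> rel_frontier K" "c + b *\<^sub>R l \<in> rel_frontier K"
    for a b :: real
  proof -
    have "c + a *\<^sub>R l \<in> open_segment c (c + b *\<^sub>R l)"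
      unfolding in_segment(2)
    proof (intro conjI exI[of _ "a / b"])
      show "c \<noteq> c + b *\<^sub>R l"
        using that(1,2) \<open>l \<noteq> 0\<close> by simp
      show "0 < a / b" "a / b < 1"
        using that(1,2) by simp_all
      show "c + a *\<^sub>R l = (1 - a / b) *\<^sub>R c + (a / b) *\<^sub>R (c + b *\<^sub>R l)"
        using that(1,2) by (simp add: algebra_simps)
    qed
    moreover have "c + b *\<^sub>R l \<in> closure K"
      using that(4) by (simp add: rel_frontier_def)
    ultimately have "c + a *\<^sub>R l \<in> rel_interior K"
      using rel_interior_closure_convex_segment[OF \<open>convex K\<close> \<open>c \<in> rel_interior K\<close>] by blast
    then show False
      using that(3) by (simp add: rel_frontier_def)
  qed
  then show ?thesis
    using assms(4-7) by (metis linorder_neqE_linordered_idom)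
qed

lemma ray_exit_beyond:
  fixes K :: "'a::euclidean_space set"
  assumes "convex K" "compact K" "c \<in> rel_interior K" "x \<in> K" "x \<noteq> c"
  obtains d where "0 < d" "ray_exit K x c = c + d *\<^sub>R (c - x)" "ray_exit K x c \<in> K"
proof -
  have "c \<in> K"
    using assms(3) rel_interior_subset by blast
  have "(2::real) *\<^sub>R c + (-1) *\<^sub>R x \<in> affine hull K"
    by (rule mem_affine[OF affine_affine_hull]) (use \<open>c \<in> K\<close> assms(4) hull_inc in auto)
  then have "c + (c - x) \<in> affine hull K"
    by (simp add: algebra_simps scaleR_2)
  moreover have "c - x \<noteq> 0"
    using assms(5) by simp
  ultimately obtain d where d: "0 < d" "c + d *\<^sub>R (c - x) \<in> rel_frontier K"
    using ray_to_rel_frontier[OF compact_imp_bounded[OF \<open>compact K\<close>] assms(3)] by blast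
  have "ray_exit K x c = c + d *\<^sub>R (c - x)"
    unfolding ray_exit_def
  proof (rule the_equality)
    show "c + d *\<^sub>R (c - x) \<in> rel_frontier K \<and> (\<exists>l>1. c + d *\<^sub>R (c - x) = x + l *\<^sub>R (c - x))"
      using d by (auto simp: algebra_simps intro!: exI[of _ "1 + d"])
  next
    fix s assume "s \<in> rel_frontier K \<and> (\<exists>l>1. s = x + l *\<^sub>R (c - x))"
    then obtain l where s: "s \<in> rel_frontier K" "1 < l" "s = x + l *\<^sub>R (c - x)"
      by blast
    then have s': "s = c + (l - 1) *\<^sub>R (c - x)"
      by (simp add: algebra_simps)
    then have "l - 1 = d"
      using rel_frontier_ray_unique[OF assms(1,3) \<open>c - x \<noteq> 0\<close> _ d(1)] s(1,2) s' d(2) by auto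
    then show "s = c + d *\<^sub>R (c - x)"
      using s' by simp
  qed
  moreover have "c + d *\<^sub>R (c - x) \<in> K"
    using d(2) compact_imp_closed[OF \<open>compact K\<close>] by (auto simp: rel_frontier_def)
  ultimately show ?thesis
    using that d(1) by simp
qed

definition gap_sq_bound :: "real \<Rightarrow> ereal \<Rightarrow> real" where
  "gap_sq_bound G \<mu> = (if \<mu> = \<infinity> then 0 else G\<^sup>2 / (2 * real_of_ereal \<mu>))"

lemma gap_sq_bound_nonneg:
  assumes "0 < \<mu>"
  shows "0 \<le> gap_sq_bound G \<mu>"
  using assms by (auto simp: gap_sq_bound_def intro!: divide_nonneg_nonneg real_of_ereal_pos)

lemma gap_sq_bound_ereal:
  "gap_sq_bound G (ereal m) = G\<^sup>2 / (2 * m)"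
  by (simp add: gap_sq_bound_def)

lemma pos_ereal_le_realE:
  assumes "0 < \<mu>" "\<mu> \<le> ereal E"
  obtains m where "\<mu> = ereal m" "0 < m" "m \<le> E"
  using assms by (cases \<mu>) auto

text \<open>The maximum of \<gamma> G - m \<gamma>^2/2 over \<gamma> is G^2/(2m).\<close>
lemma decrease_le_of_quadratic_growth:
  fixes m \<gamma> a G \<Delta> :: real
  assumes "0 < m" "0 < \<gamma>" "m \<le> 2 / \<gamma>\<^sup>2 * (\<Delta> + \<gamma> * a)" "a \<le> G"
  shows "- \<Delta> \<le> G\<^sup>2 / (2 * m)"
proof -
  have "- \<Delta> \<le> \<gamma> * a - m * \<gamma>\<^sup>2 / 2"
    using assms(2,3) by (simp add: field_simps)
  also have "\<dots> \<le> \<gamma> * G - m * \<gamma>\<^sup>2 / 2"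
    using assms(2,4) by simp
  also have "\<dots> \<le> G\<^sup>2 / (2 * m)"
  proof -
    have "0 \<le> (G - \<gamma> * m)\<^sup>2"
      by simp
    then have "2 * m * (\<gamma> * G - m * \<gamma>\<^sup>2 / 2) \<le> G\<^sup>2"
      by (simp add: power2_eq_square algebra_simps)
    then show ?thesis
      using assms(1) by (simp add: field_simps)
  qed
  finally show ?thesis .
qed

lemma mu_int_f_gap_bound:
  fixes K :: "'a::euclidean_space set"
  assumes "convex K" "compact K" "xc \<in> rel_interior K" "x \<in> K"
    and "s \<in> K" and s_min: "\<forall>s'\<in>K. df x \<bullet> s \<le> df x \<bullet> s'"
    and "0 < \<mu>" "\<mu> \<le> mu_int_f K f df xc"
  shows "f x - f xc \<le> gap_sq_bound (df x \<bullet> (x - s)) \<mu>"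
proof (cases "x = xc")
  case True
  then show ?thesis
    using gap_sq_bound_nonneg[OF \<open>0 < \<mu>\<close>] by simp
next
  case False
  then obtain d where d: "0 < d" "ray_exit K x xc = xc + d *\<^sub>R (xc - x)" "ray_exit K x xc \<in> K"
    using ray_exit_beyond[OF assms(1-4)] by metis
  define p where "p = ray_exit K x xc"
  define \<gamma> where "\<gamma> = 1 / (1 + d)"
  have "0 < \<gamma>" "\<gamma> \<le> 1"
    using d(1) by (auto simp: \<gamma>_def)
  have "p - x = (1 + d) *\<^sub>R (xc - x)"
    by (simp add: p_def d(2) algebra_simps)
  then have xc: "xc - x = \<gamma> *\<^sub>R (p - x)"
    using d(1) by (simp add: \<gamma>_def)
  then have "xc = x + \<gamma> *\<^sub>R (ray_exit K x xc - x)"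
    by (simp add: p_def algebra_simps)
  then have "2 / \<gamma>\<^sup>2 * (f xc - f x - (xc - x) \<bullet> df x) \<in> {2 / \<gamma>\<^sup>2 * (f u - f x - (u - x) \<bullet> df x) | x \<gamma> u.
      x \<in> K - {xc} \<and> 0 < \<gamma> \<and> \<gamma> \<le> 1 \<and> u = x + \<gamma> *\<^sub>R (ray_exit K x xc - x)}"
    using \<open>x \<in> K\<close> False \<open>0 < \<gamma>\<close> \<open>\<gamma> \<le> 1\<close> by blast
  then have "mu_int_f K f df xc \<le> ereal (2 / \<gamma>\<^sup>2 * (f xc - f x - (xc - x) \<bullet> df x))"
    unfolding mu_int_f_def by (intro Inf_lower imageI)
  moreover have "(xc - x) \<bullet> df x = - (\<gamma> * (df x \<bullet> (x - p)))"
    unfolding xc by (simp add: inner_commute inner_diff_right algebra_simps)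
  ultimately have "mu_int_f K f df xc \<le> ereal (2 / \<gamma>\<^sup>2 * ((f xc - f x) + \<gamma> * (df x \<bullet> (x - p))))"
    by simp
  then obtain m where m: "\<mu> = ereal m" "0 < m"
      "m \<le> 2 / \<gamma>\<^sup>2 * ((f xc - f x) + \<gamma> * (df x \<bullet> (x - p)))"
    using pos_ereal_le_realE[OF \<open>0 < \<mu>\<close> order_trans[OF \<open>\<mu> \<le> mu_int_f K f df xc\<close>]] by blast
  have "df x \<bullet> (x - p) \<le> df x \<bullet> (x - s)"
    using s_min d(3) by (simp add: p_def inner_diff_right)
  from decrease_le_of_quadratic_growth[OF m(2) \<open>0 < \<gamma>\<close> m(3) this]
  show ?thesis
    by (simp add: m(1) gap_sq_bound_ereal)
qed

lemma v_S_max: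
  fixes g :: "'a::real_inner"
  assumes "finite T" "T \<noteq> {}"
  shows "v_S g T \<in> T" "\<forall>u\<in>T. g \<bullet> u \<le> g \<bullet> v_S g T"
proof -
  have "\<exists>v. v \<in> T \<and> (\<forall>u\<in>T. g \<bullet> u \<le> g \<bullet> v)"
    using ex_is_arg_min_if_finite[OF assms, of "\<lambda>u. - (g \<bullet> u)"] by (auto simp: is_arg_min_linorder)
  then have "v_S g T \<in> T \<and> (\<forall>u\<in>T. g \<bullet> u \<le> g \<bullet> v_S g T)"
    unfolding v_S_def by (rule someI_ex)
  then show "v_S g T \<in> T" "\<forall>u\<in>T. g \<bullet> u \<le> g \<bullet> v_S g T"
    by blast+
qed

lemma s_f_min:
  fixes g :: "'a::real_inner"
  assumes "finite A" "A \<noteq> {}"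
  shows "s_f A g \<in> A" "\<forall>v\<in>A. g \<bullet> s_f A g \<le> g \<bullet> v"
proof -
  have "\<exists>s. s \<in> A \<and> (\<forall>v\<in>A. g \<bullet> s \<le> g \<bullet> v)"
    using ex_is_arg_min_if_finite[OF assms, of "\<lambda>u. g \<bullet> u"] by (auto simp: is_arg_min_linorder)
  then have "s_f A g \<in> A \<and> (\<forall>v\<in>A. g \<bullet> s_f A g \<le> g \<bullet> v)"
    unfolding s_f_def by (rule someI_ex)
  then show "s_f A g \<in> A" "\<forall>v\<in>A. g \<bullet> s_f A g \<le> g \<bullet> v"
    by blast+
qed

lemma active_fams_finite:
  assumes "finite A"
  shows "finite (active_fams A x)"
  by (rule finite_subset[of _ "Pow A"]) (use assms in \<open>auto simp: active_fams_def\<close>)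

lemma active_fams_memD:
  assumes "finite A" "T \<in> active_fams A x"
  shows "finite T" "T \<noteq> {}" "x \<in> convex hull T"
proof -
  obtain \<beta> where \<beta>: "T \<subseteq> A" "\<forall>v\<in>T. 0 < \<beta> v" "sum \<beta> T = 1" "(\<Sum>v\<in>T. \<beta> v *\<^sub>R v) = x"
    using assms(2) unfolding active_fams_def by blast
  show "finite T"
    using \<beta>(1) assms(1) finite_subset by blast
  then show "T \<noteq> {}" "x \<in> convex hull T"
    using \<beta> by (auto simp: convex_hull_finite less_imp_le intro!: exI[of _ \<beta>])
qed

lemma v_f_min:
  fixes g :: "'a::real_inner"
  assumes "finite A" "S \<in> active_fams A x"
  shows "\<exists>T\<in>active_fams A x. v_f A g x = v_S g T"
    "\<forall>T\<in>active_fams A x. g \<bullet> v_f A g x \<le> g \<bullet> v_S g T"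
proof -
  obtain T0 where "T0 \<in> active_fams A x" "\<forall>T\<in>active_fams A x. g \<bullet> v_S g T0 \<le> g \<bullet> v_S g T"
    using ex_is_arg_min_if_finite[OF active_fams_finite[OF assms(1)], of x "\<lambda>T. g \<bullet> v_S g T"] assms(2)
    by (auto simp: is_arg_min_linorder)
  then have "\<exists>v. (\<exists>T\<in>active_fams A x. v = v_S g T) \<and> (\<forall>T\<in>active_fams A x. g \<bullet> v \<le> g \<bullet> v_S g T)"
    by blast
  then have "(\<exists>T\<in>active_fams A x. v_f A g x = v_S g T)
      \<and> (\<forall>T\<in>active_fams A x. g \<bullet> v_f A g x \<le> g \<bullet> v_S g T)"
    unfolding v_f_def by (rule someI_ex)
  then show "\<exists>T\<in>active_fams A x. v_f A g x = v_S g T"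
    "\<forall>T\<in>active_fams A x. g \<bullet> v_f A g x \<le> g \<bullet> v_S g T"
    by blast+
qed

text \<open>v_f minimises the away vertex over all active sets, so the away vertex of SP-AFW
  can only enlarge the pairwise gap.\<close>
lemma pairwise_gap_sandwich:
  fixes A :: "'a::real_inner set"
  assumes "finite A" "S \<subseteq> A" "\<forall>v\<in>S. \<alpha> v > 0" "sum \<alpha> S = 1" "x = (\<Sum>v\<in>S. \<alpha> v *\<^sub>R v)"
    and "vx \<in> S" "\<forall>v\<in>S. g \<bullet> v \<le> g \<bullet> vx"
    and "\<forall>s'\<in>convex hull A. g \<bullet> s \<le> g \<bullet> s'" "x' \<in> convex hull A"
  shows "g \<bullet> (x - x') \<le> g \<bullet> (v_f A g x - s_f A g)"
    "g \<bullet> (v_f A g x - s_f A g) \<le> g \<bullet> (vx - s)"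
proof -
  have S: "S \<in> active_fams A x"
    unfolding active_fams_def using assms(2-5) by blast
  have "A \<noteq> {}"
    using assms(2,6) by blast
  note sf = s_f_min[OF assms(1) this, of g]
  obtain T where T: "T \<in> active_fams A x" "v_f A g x = v_S g T"
    using v_f_min(1)[OF assms(1) S] by blast
  have "g \<bullet> x \<le> g \<bullet> v_f A g x"
  proof -
    obtain \<beta> where \<beta>: "\<forall>v\<in>T. \<beta> v > 0" "sum \<beta> T = 1" "x = (\<Sum>v\<in>T. \<beta> v *\<^sub>R v)"
      using T(1) unfolding active_fams_def by auto
    have "\<forall>u\<in>T. g \<bullet> u \<le> g \<bullet> v_f A g x"
      using v_S_max(2)[OF active_fams_memD(1,2)[OF assms(1) T(1)]] T(2) by simp
    then show ?thesis
      using inner_convex_comb_le[OF \<beta>(1,2)] \<beta>(3) by simp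
  qed
  moreover have "g \<bullet> v_f A g x \<le> g \<bullet> vx"
  proof -
    have "g \<bullet> v_f A g x \<le> g \<bullet> v_S g S"
      using v_f_min(2)[OF assms(1) S] S by blast
    also have "\<dots> \<le> g \<bullet> vx"
      using assms(7) v_S_max(1)[OF active_fams_memD(1,2)[OF assms(1) S]] by blast
    finally show ?thesis .
  qed
  moreover have "g \<bullet> s_f A g \<le> g \<bullet> x'"
  proof -
    have "convex hull A \<subseteq> {y. g \<bullet> s_f A g \<le> g \<bullet> y}"
      by (rule hull_minimal) (use sf in \<open>auto simp: convex_halfspace_ge\<close>)
    then show ?thesis
      using assms(9) by auto
  qed
  moreover have "g \<bullet> s \<le> g \<bullet> s_f A g"
    using assms(8) sf(1) hull_subset[of A convex] by auto
  ultimately show "g \<bullet> (x - x') \<le> g \<bullet> (v_f A g x - s_f A g)"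
    "g \<bullet> (v_f A g x - s_f A g) \<le> g \<bullet> (vx - s)"
    by (simp_all add: inner_diff_right)
qed

lemma pairwise_gap_nonneg:
  fixes A :: "'a::real_inner set"
  assumes "finite A" "S \<subseteq> A" "\<forall>v\<in>S. \<alpha> v > 0" "sum \<alpha> S = 1" "x = (\<Sum>v\<in>S. \<alpha> v *\<^sub>R v)"
    and "vx \<in> S" "\<forall>v\<in>S. g \<bullet> v \<le> g \<bullet> vx"
    and "\<forall>s'\<in>convex hull A. g \<bullet> s \<le> g \<bullet> s'" "x \<in> convex hull A"
  shows "0 \<le> g \<bullet> (vx - s)"
  using pairwise_gap_sandwich[OF assms] by simp

lemma mu_A_f_gap_bound:
  fixes A :: "'a::real_inner set"
  assumes "finite A" "S \<subseteq> A" "\<forall>v\<in>S. \<alpha> v > 0" "sum \<alpha> S = 1" "x = (\<Sum>v\<in>S. \<alpha> v *\<^sub>R v)"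
    and "vx \<in> S" "\<forall>v\<in>S. df x \<bullet> v \<le> df x \<bullet> vx"
    and "\<forall>s'\<in>convex hull A. df x \<bullet> s \<le> df x \<bullet> s'" "xo \<in> convex hull A"
    and tangent: "f x + df x \<bullet> (xo - x) \<le> f xo"
    and "0 < \<mu>" "\<mu> \<le> mu_A_f A f df"
  shows "f x - f xo \<le> gap_sq_bound (df x \<bullet> (vx - s)) \<mu>"
proof (cases "df x \<bullet> (xo - x) < 0")
  case False
  then show ?thesis
    using tangent gap_sq_bound_nonneg[OF \<open>0 < \<mu>\<close>, of "df x \<bullet> (vx - s)"] by linarith
next
  case True
  note gaps = pairwise_gap_sandwich[OF assms(1-9)]
  define den where "den = df x \<bullet> (v_f A (df x) x - s_f A (df x))"
  define \<gamma> where "\<gamma> = gamma_A A df x xo"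
  have "x \<in> convex hull A"
    using active_fams_memD(3)[OF assms(1)] hull_mono[OF assms(2)] assms(2-5)
    unfolding active_fams_def by blast
  have "0 < df x \<bullet> (x - xo)"
    using True by (simp add: inner_diff_right)
  then have "0 < den" "\<gamma> = df x \<bullet> (x - xo) / den"
    using gaps(1) by (simp_all add: den_def \<gamma>_def gamma_A_def inner_diff_right)
  then have "0 < \<gamma>" "df x \<bullet> (x - xo) = \<gamma> * den"
    using \<open>0 < df x \<bullet> (x - xo)\<close> by simp_all
  have "2 / \<gamma>\<^sup>2 * (f xo - f x - (xo - x) \<bullet> df x) \<in> {2 / (gamma_A A df x x')\<^sup>2 * (f x' - f x - (x' - x) \<bullet> df x)
      | x x'. x \<in> convex hull A \<and> x' \<in> convex hull A \<and> df x \<bullet> (x' - x) < 0}"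
    unfolding \<gamma>_def using \<open>x \<in> convex hull A\<close> assms(9) True by blast
  then have "mu_A_f A f df \<le> ereal (2 / \<gamma>\<^sup>2 * (f xo - f x - (xo - x) \<bullet> df x))"
    unfolding mu_A_f_def by (intro Inf_lower imageI)
  moreover have "(xo - x) \<bullet> df x = - (\<gamma> * den)"
    using \<open>df x \<bullet> (x - xo) = \<gamma> * den\<close> by (simp add: inner_commute inner_diff_right)
  ultimately have "mu_A_f A f df \<le> ereal (2 / \<gamma>\<^sup>2 * ((f xo - f x) + \<gamma> * den))"
    by simp
  then obtain m where m: "\<mu> = ereal m" "0 < m" "m \<le> 2 / \<gamma>\<^sup>2 * ((f xo - f x) + \<gamma> * den)"
    using pos_ereal_le_realE[OF \<open>0 < \<mu>\<close> order_trans[OF \<open>\<mu> \<le> mu_A_f A f df\<close>]] by blast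
  from decrease_le_of_quadratic_growth[OF m(2) \<open>0 < \<gamma>\<close> m(3) gaps(2)[folded den_def]]
  show ?thesis
    by (simp add: m(1) gap_sq_bound_ereal)
qed

lemma sqrt_add_le_of_sq_bound:
  fixes a b G1 G2 m :: real
  assumes "0 \<le> a" "0 \<le> b" "0 \<le> G1" "0 \<le> G2" "0 < m"
    and "a + b \<le> G1\<^sup>2 / (2 * m) + G2\<^sup>2 / (2 * m)"
  shows "sqrt a + sqrt b \<le> (G1 + G2) / sqrt m"
proof (rule power2_le_imp_le)
  have "0 \<le> (sqrt a - sqrt b)\<^sup>2"
    by simp
  then have "(sqrt a + sqrt b)\<^sup>2 \<le> 2 * (a + b)"
    using assms(1,2) by (simp add: power2_sum power2_diff)
  also have "\<dots> \<le> 2 * (G1\<^sup>2 / (2 * m) + G2\<^sup>2 / (2 * m))"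
    using assms(6) by (rule mult_left_mono) simp
  also have "\<dots> = (G1\<^sup>2 + G2\<^sup>2) / m"
    using assms(5) by (simp add: field_simps)
  also have "\<dots> \<le> (G1 + G2)\<^sup>2 / m"
    using assms(3-5) by (intro divide_right_mono) (simp_all add: power2_sum)
  also have "\<dots> = ((G1 + G2) / sqrt m)\<^sup>2"
    using assms(5) by (simp add: power_divide)
  finally show "(sqrt a + sqrt b)\<^sup>2 \<le> ((G1 + G2) / sqrt m)\<^sup>2" .
  show "0 \<le> (G1 + G2) / sqrt m"
    using assms(3-5) by simp
qed

lemma descent_absorb_error:
  fixes w w' \<gamma> D E G k c C :: real
  assumes "w' \<le> w - \<gamma> * D + \<gamma> * E + \<gamma>\<^sup>2 * C" "E \<le> k * G" "c * G \<le> D" "0 \<le> \<gamma>"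
  shows "w' \<le> w - (c - k) * \<gamma> * G + \<gamma>\<^sup>2 * C"
proof -
  have "\<gamma> * E \<le> \<gamma> * (k * G)" "\<gamma> * (c * G) \<le> \<gamma> * D"
    using assms(2-4) by (simp_all add: mult_left_mono)
  then show ?thesis
    using assms(1) by (simp add: algebra_simps)
qed

lemma inner_argmin_Times:
  fixes r s :: "'a::real_inner \<times> 'b::real_inner"
  assumes "s \<in> S \<times> T" and min: "\<forall>s'\<in>S \<times> T. s \<bullet> r \<le> s' \<bullet> r"
  shows "\<forall>x\<in>S. fst r \<bullet> fst s \<le> fst r \<bullet> x" "\<forall>y\<in>T. snd r \<bullet> snd s \<le> snd r \<bullet> y"
proof -
  show "\<forall>x\<in>S. fst r \<bullet> fst s \<le> fst r \<bullet> x"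
  proof
    fix x assume "x \<in> S"
    then have "s \<bullet> r \<le> (x, snd s) \<bullet> r"
      using assms(1) min by auto
    then show "fst r \<bullet> fst s \<le> fst r \<bullet> x"
      by (cases s, cases r) (simp add: inner_commute)
  qed
  show "\<forall>y\<in>T. snd r \<bullet> snd s \<le> snd r \<bullet> y"
  proof
    fix y assume "y \<in> T"
    then have "s \<bullet> r \<le> (fst s, y) \<bullet> r"
      using assms(1) min by auto
    then show "snd r \<bullet> snd s \<le> snd r \<bullet> y"
      by (cases s, cases r) (simp add: inner_commute)
  qed
qed

locale sc_saddle_problem =
  fixes X :: "'a::euclidean_space set" and Y :: "'b::euclidean_space set"
    and L :: "'a \<Rightarrow> 'b \<Rightarrow> real" and gx :: "'a \<Rightarrow> 'b \<Rightarrow> 'a" and gy :: "'a \<Rightarrow> 'b \<Rightarrow> 'b"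
    and \<mu>X \<mu>Y :: real and xs :: 'a and ys :: 'b
  assumes convex_X: "convex X" and convex_Y: "convex Y"
    and deriv: "\<And>x y. x \<in> X \<Longrightarrow> y \<in> Y \<Longrightarrow>
      ((\<lambda>z. L (fst z) (snd z)) has_derivative (\<lambda>h. gx x y \<bullet> fst h + gy x y \<bullet> snd h)) (at (x, y))"
    and \<mu>X_pos: "0 < \<mu>X" and \<mu>Y_pos: "0 < \<mu>Y"
    and sconvex_X: "\<And>y. y \<in> Y \<Longrightarrow> sconvex_on \<mu>X X (\<lambda>x. L x y)"
    and sconcave_Y: "\<And>x. x \<in> X \<Longrightarrow> sconvex_on \<mu>Y Y (\<lambda>y. - L x y)"
    and saddle: "is_saddle X Y L xs ys"
    and C_L_finite: "C_L X Y L gx gy < \<infinity>"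
    and M_L_finite: "M_L X Y L gx gy xs ys < \<infinity>"
begin

abbreviation M :: real where
  "M \<equiv> real_of_ereal (M_L X Y L gx gy xs ys)"

abbreviation C :: real where
  "C \<equiv> real_of_ereal (C_L X Y L gx gy)"

lemma saddle_point:
  "xs \<in> X" "ys \<in> Y" "\<And>y. y \<in> Y \<Longrightarrow> L xs y \<le> L xs ys" "\<And>x. x \<in> X \<Longrightarrow> L xs ys \<le> L x ys"
  using saddle unfolding is_saddle_def by auto

lemma tangent_X:
  assumes "x \<in> X" "x' \<in> X" "y \<in> Y"
  shows "L x y + gx x y \<bullet> (x' - x) \<le> L x' y"
proof -
  have "((\<lambda>x. (x, y)) has_derivative (\<lambda>h. (h, 0))) (at x)"
    by (auto intro!: derivative_eq_intros)
  from diff_chain_at[OF this deriv[OF assms(1,3)]]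
  have "((\<lambda>x. L x y) has_derivative (\<lambda>h. gx x y \<bullet> h)) (at x)"
    by (simp add: o_def)
  from convex_on_above_tangent[OF sconvex_on_imp_convex_on[OF sconvex_X] assms(1,2) this]
  show ?thesis
    using assms(3) \<mu>X_pos convex_X by simp
qed

lemma tangent_Y:
  assumes "x \<in> X" "y \<in> Y" "y' \<in> Y"
  shows "- L x y + (- gy x y) \<bullet> (y' - y) \<le> - L x y'"
proof -
  have "((\<lambda>y. (x, y)) has_derivative (\<lambda>h. (0, h))) (at y)"
    by (auto intro!: derivative_eq_intros)
  from diff_chain_at[OF this deriv[OF assms(1,2)]]
  have "((\<lambda>y. - L x y) has_derivative (\<lambda>h. - (gy x y \<bullet> h))) (at y)"
    by (auto simp: o_def intro: has_derivative_minus)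
  from convex_on_above_tangent[OF sconvex_on_imp_convex_on[OF sconcave_Y] assms(2,3) this]
  show ?thesis
    using assms(1) \<mu>Y_pos convex_Y by simp
qed

lemma M_XY_bound:
  assumes "x \<in> X" "y \<in> Y" "s \<in> X" "v \<in> X"
  shows "(s - v) \<bullet> (gx x ys - gx x y) \<le> M * sqrt (L xs ys - L xs y)"
proof (cases "y = ys")
  case False
  have "- L xs ys < - L xs y"
    using sconvex_on_argmin_strict[OF sconcave_Y[OF saddle_point(1)] \<mu>Y_pos convex_Y saddle_point(2)]
      saddle_point(3) assms(2) False by simp
  then have pos: "0 < L xs ys - L xs y"
    by simp
  define e where "e = (s - v) \<bullet> ((gx x ys - gx x y) /\<^sub>R sqrt (L xs ys - L xs y))"
  have "e \<in> {(s - v) \<bullet> ((gx x ys - gx x y) /\<^sub>R sqrt (L xs ys - L xs y)) | x y s v.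
      y \<in> Y \<and> y \<noteq> ys \<and> x \<in> X \<and> s \<in> X \<and> v \<in> X}"
    unfolding e_def using assms False by blast
  then have "ereal e \<le> M_L X Y L gx gy xs ys"
    unfolding M_L_def M_XY_def by (intro max.coboundedI1 Sup_upper imageI)
  then have "e \<le> M"
    using M_L_finite by (cases "M_L X Y L gx gy xs ys") auto
  moreover have "e = (s - v) \<bullet> (gx x ys - gx x y) / sqrt (L xs ys - L xs y)"
    by (simp add: e_def divide_inverse mult.commute)
  ultimately show ?thesis
    using pos by (simp add: divide_le_eq)
qed (simp)

lemma M_YX_bound:
  assumes "x \<in> X" "y \<in> Y" "s \<in> Y" "v \<in> Y"
  shows "(s - v) \<bullet> (gy x y - gy xs y) \<le> M * sqrt (L x ys - L xs ys)"
proof (cases "x = xs")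
  case False
  have "L xs ys < L x ys"
    using sconvex_on_argmin_strict[OF sconvex_X[OF saddle_point(2)] \<mu>X_pos convex_X saddle_point(1)]
      saddle_point(4) assms(1) False by simp
  then have pos: "0 < L x ys - L xs ys"
    by simp
  define e where "e = (s - v) \<bullet> ((gy x y - gy xs y) /\<^sub>R sqrt (L x ys - L xs ys))"
  have "e \<in> {(s - v) \<bullet> ((gy x y - gy xs y) /\<^sub>R sqrt (L x ys - L xs ys)) | x y s v.
      x \<in> X \<and> x \<noteq> xs \<and> y \<in> Y \<and> s \<in> Y \<and> v \<in> Y}"
    unfolding e_def using assms False by blast
  then have "ereal e \<le> M_L X Y L gx gy xs ys"
    unfolding M_L_def M_YX_def by (intro max.coboundedI2 Sup_upper imageI)
  then have "e \<le> M"
    using M_L_finite by (cases "M_L X Y L gx gy xs ys") auto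
  moreover have "e = (s - v) \<bullet> (gy x y - gy xs y) / sqrt (L x ys - L xs ys)"
    by (simp add: e_def divide_inverse mult.commute)
  ultimately show ?thesis
    using pos by (simp add: divide_le_eq)
qed (simp)

lemma M_nonneg: "0 \<le> M"
proof (cases "(\<exists>y\<in>Y. y \<noteq> ys) \<or> (\<exists>x\<in>X. x \<noteq> xs)")
  case True
  then have "0 \<le> M_L X Y L gx gy xs ys"
  proof
    assume "\<exists>y\<in>Y. y \<noteq> ys"
    then obtain y where "y \<in> Y" "y \<noteq> ys"
      by blast
    then have "ereal ((xs - xs) \<bullet> ((gx xs ys - gx xs y) /\<^sub>R sqrt (L xs ys - L xs y)))
        \<le> M_L X Y L gx gy xs ys"
      unfolding M_L_def M_XY_def using saddle_point(1)
      by (intro max.coboundedI1 Sup_upper imageI) blast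
    then show ?thesis
      by (simp add: zero_ereal_def)
  next
    assume "\<exists>x\<in>X. x \<noteq> xs"
    then obtain x where "x \<in> X" "x \<noteq> xs"
      by blast
    then have "ereal ((ys - ys) \<bullet> ((gy x ys - gy xs ys) /\<^sub>R sqrt (L x ys - L xs ys)))
        \<le> M_L X Y L gx gy xs ys"
      unfolding M_L_def M_YX_def using saddle_point(2)
      by (intro max.coboundedI2 Sup_upper imageI) blast
    then show ?thesis
      by (simp add: zero_ereal_def)
  qed
  then show ?thesis
    using M_L_finite by (cases "M_L X Y L gx gy xs ys") auto
next
  case False
  have "M_XY X Y L gx xs ys \<le> -\<infinity>"
    unfolding M_XY_def by (rule Sup_least) (use False in auto)
  moreover have "M_YX X Y L gy xs ys \<le> -\<infinity>"
    unfolding M_YX_def by (rule Sup_least) (use False in auto)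
  ultimately show ?thesis
    by (simp add: M_L_def)
qed

lemma curvature_constants:
  obtains cx cy where "C = (cx + cy) / 2"
    "\<And>y. y \<in> Y \<Longrightarrow> curv X (\<lambda>x. L x y) (\<lambda>x. gx x y) \<le> ereal cx"
    "\<And>x. x \<in> X \<Longrightarrow> curv Y (\<lambda>y. - L x y) (\<lambda>y. - gy x y) \<le> ereal cy"
proof -
  define Cx where "Cx = Sup ((\<lambda>y. curv X (\<lambda>x. L x y) (\<lambda>x. gx x y)) ` Y)"
  define Cy where "Cy = Sup ((\<lambda>x. curv Y (\<lambda>y. - L x y) (\<lambda>y. - gy x y)) ` X)"
  have "0 \<le> Cx"
    unfolding Cx_def by (rule SUP_upper2[OF saddle_point(2) curv_nonneg[OF saddle_point(1)]])
  moreover have "0 \<le> Cy"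
    unfolding Cy_def by (rule SUP_upper2[OF saddle_point(1) curv_nonneg[OF saddle_point(2)]])
  moreover have CL: "C_L X Y L gx gy = (Cx + Cy) / 2"
    by (simp add: C_L_def Cx_def Cy_def)
  ultimately obtain cx cy where "Cx = ereal cx" "Cy = ereal cy"
    using C_L_finite by (cases Cx; cases Cy) auto
  moreover have "\<And>y. y \<in> Y \<Longrightarrow> curv X (\<lambda>x. L x y) (\<lambda>x. gx x y) \<le> Cx"
    "\<And>x. x \<in> X \<Longrightarrow> curv Y (\<lambda>y. - L x y) (\<lambda>y. - gy x y) \<le> Cy"
    unfolding Cx_def Cy_def by (rule SUP_upper; assumption)+
  ultimately show ?thesis
    using CL by (intro that[of cx cy]) simp_all
qed

lemma wgap_step:
  assumes "x \<in> X" "y \<in> Y" "s1 \<in> X" "v1 \<in> X" "s2 \<in> Y" "v2 \<in> Y" "0 \<le> \<gamma>"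
    and "x + \<gamma> *\<^sub>R (s1 - v1) \<in> X" "y + \<gamma> *\<^sub>R (s2 - v2) \<in> Y"
  shows "wgap L xs ys ((x, y) + \<gamma> *\<^sub>R (s1 - v1, s2 - v2))
    \<le> wgap L xs ys (x, y) - \<gamma> * ((- rvec gx gy (x, y)) \<bullet> (s1 - v1, s2 - v2))
      + \<gamma> * (M * (sqrt (L x ys - L xs ys) + sqrt (L xs ys - L xs y))) + \<gamma>\<^sup>2 * C"
proof -
  obtain cx cy where C: "C = (cx + cy) / 2"
    and cx: "curv X (\<lambda>x. L x ys) (\<lambda>x. gx x ys) \<le> ereal cx"
    and cy: "curv Y (\<lambda>y. - L xs y) (\<lambda>y. - gy xs y) \<le> ereal cy"
    using curvature_constants saddle_point(1,2) by metis
  have "L (x + \<gamma> *\<^sub>R (s1 - v1)) ys - L x ys - \<gamma> * ((s1 - v1) \<bullet> gx x ys) \<le> \<gamma>\<^sup>2 / 2 * cx"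
    using curv_bound[OF assms(1,3,4,7,8) cx] by simp
  moreover have "L xs y - L xs (y + \<gamma> *\<^sub>R (s2 - v2)) + \<gamma> * ((s2 - v2) \<bullet> gy xs y) \<le> \<gamma>\<^sup>2 / 2 * cy"
    using curv_bound[OF assms(2,5,6,7,9) cy] by simp
  moreover have "\<gamma> * ((s1 - v1) \<bullet> gx x ys) - \<gamma> * ((s1 - v1) \<bullet> gx x y)
      \<le> \<gamma> * (M * sqrt (L xs ys - L xs y))"
    using mult_left_mono[OF M_XY_bound[OF assms(1-4)] assms(7)]
    by (simp add: inner_diff_right right_diff_distrib)
  moreover have "\<gamma> * ((s2 - v2) \<bullet> gy x y) - \<gamma> * ((s2 - v2) \<bullet> gy xs y)
      \<le> \<gamma> * (M * sqrt (L x ys - L xs ys))"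
    using mult_left_mono[OF M_YX_bound[OF assms(1,2,5,6)] assms(7)]
    by (simp add: inner_diff_right right_diff_distrib)
  moreover have "\<gamma> * ((- rvec gx gy (x, y)) \<bullet> (s1 - v1, s2 - v2))
      = \<gamma> * ((s2 - v2) \<bullet> gy x y) - \<gamma> * ((s1 - v1) \<bullet> gx x y)"
    by (simp add: rvec_def inner_commute right_diff_distrib)
  moreover have "wgap L xs ys ((x, y) + \<gamma> *\<^sub>R (s1 - v1, s2 - v2))
      = L (x + \<gamma> *\<^sub>R (s1 - v1)) ys - L xs (y + \<gamma> *\<^sub>R (s2 - v2))"
    by (simp add: wgap_def)
  moreover have "wgap L xs ys (x, y) = L x ys - L xs y"
    by (simp add: wgap_def)
  moreover have "\<gamma> * (M * (sqrt (L x ys - L xs ys) + sqrt (L xs ys - L xs y)))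
      = \<gamma> * (M * sqrt (L x ys - L xs ys)) + \<gamma> * (M * sqrt (L xs ys - L xs y))"
    by (simp add: algebra_simps)
  moreover have "\<gamma>\<^sup>2 * C = \<gamma>\<^sup>2 / 2 * cx + \<gamma>\<^sup>2 / 2 * cy"
    by (simp add: C algebra_simps)
  ultimately show ?thesis
    by linarith
qed

lemma bilinear_error_le:
  assumes "x \<in> X" "y \<in> Y" "0 < \<mu>" "0 \<le> G1" "0 \<le> G2"
    and "L x y - L xs y \<le> gap_sq_bound G1 \<mu>" "L x ys - L x y \<le> gap_sq_bound G2 \<mu>"
  shows "M * (sqrt (L x ys - L xs ys) + sqrt (L xs ys - L xs y))
    \<le> (if \<mu> = \<infinity> then 0 else M / sqrt (real_of_ereal \<mu>)) * (G1 + G2)"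
proof -
  have hx: "0 \<le> L x ys - L xs ys" and hy: "0 \<le> L xs ys - L xs y"
    using saddle_point assms(1,2) by fastforce+
  have sum: "(L x ys - L xs ys) + (L xs ys - L xs y) \<le> gap_sq_bound G1 \<mu> + gap_sq_bound G2 \<mu>"
    using assms(6,7) by linarith
  show ?thesis
  proof (cases "\<mu> = \<infinity>")
    case True
    then have "L x ys - L xs ys = 0" "L xs ys - L xs y = 0"
      using sum hx hy by (simp_all add: gap_sq_bound_def)
    then show ?thesis
      using True by simp
  next
    case False
    then obtain m where m: "\<mu> = ereal m" "0 < m"
      using assms(3) by (cases \<mu>) auto
    then have "sqrt (L x ys - L xs ys) + sqrt (L xs ys - L xs y) \<le> (G1 + G2) / sqrt m"
      using sqrt_add_le_of_sq_bound[OF hx hy assms(4,5)] sum by (simp add: gap_sq_bound_ereal)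
    from mult_left_mono[OF this M_nonneg]
    show ?thesis
      using m by simp
  qed
qed

lemma wgap_descent:
  assumes "x \<in> X" "y \<in> Y" "s1 \<in> X" "v1 \<in> X" "s2 \<in> Y" "v2 \<in> Y" "0 \<le> \<gamma>"
    and "x + \<gamma> *\<^sub>R (s1 - v1) \<in> X" "y + \<gamma> *\<^sub>R (s2 - v2) \<in> Y"
    and "0 < \<mu>" "0 \<le> G1" "0 \<le> G2"
    and "L x y - L xs y \<le> gap_sq_bound G1 \<mu>" "L x ys - L x y \<le> gap_sq_bound G2 \<mu>"
    and "c * (G1 + G2) \<le> (- rvec gx gy (x, y)) \<bullet> (s1 - v1, s2 - v2)"
  shows "wgap L xs ys ((x, y) + \<gamma> *\<^sub>R (s1 - v1, s2 - v2))
    \<le> wgap L xs ys (x, y) - nu_coef c (M_L X Y L gx gy xs ys) \<mu> * \<gamma> * (G1 + G2) + \<gamma>\<^sup>2 * C"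
  using descent_absorb_error[OF wgap_step[OF assms(1-9)] bilinear_error_le[OF assms(1,2,10-14)]
      assms(15,7)]
  by (simp add: nu_coef_def)

lemma FW_step_interior:
  assumes "compact X" "compact Y" "(xs, ys) \<in> rel_interior (X \<times> Y)"
    and "0 < mu_int_L X Y L gx gy xs ys" and "zt \<in> X \<times> Y"
    and "s \<in> X \<times> Y" "\<forall>s'\<in>X \<times> Y. s \<bullet> rvec gx gy zt \<le> s' \<bullet> rvec gx gy zt" and "\<gamma> \<in> {0..1}"
  shows "wgap L xs ys (zt + \<gamma> *\<^sub>R (s - zt))
    \<le> wgap L xs ys zt - nu_coef 1 (M_L X Y L gx gy xs ys) (mu_int_L X Y L gx gy xs ys) * \<gamma>
        * ((- rvec gx gy zt) \<bullet> (s - zt)) + \<gamma>\<^sup>2 * C"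
proof -
  define \<mu> where "\<mu> = mu_int_L X Y L gx gy xs ys"
  obtain x y sx sy where z: "zt = (x, y)" "s = (sx, sy)"
    by (cases zt, cases s)
  have xy: "x \<in> X" "y \<in> Y" "sx \<in> X" "sy \<in> Y"
    using assms(5,6) z by auto
  have sx: "\<forall>x'\<in>X. gx x y \<bullet> sx \<le> gx x y \<bullet> x'" and sy: "\<forall>y'\<in>Y. (- gy x y) \<bullet> sy \<le> (- gy x y) \<bullet> y'"
    using inner_argmin_Times[OF assms(6,7)] z by (simp_all add: rvec_def)
  have ri: "xs \<in> rel_interior X" "ys \<in> rel_interior Y"
    using assms(3) rel_interior_Times[OF convex_X convex_Y] by auto
  have "0 < \<mu>"
    using assms(4) by (simp add: \<mu>_def)
  have "\<mu> \<le> mu_int_f X (\<lambda>x. L x y) (\<lambda>x. gx x y) xs" "\<mu> \<le> mu_int_f Y (\<lambda>y. - L x y) (\<lambda>y. - gy x y) ys"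
    unfolding \<mu>_def mu_int_L_def using xy(1,2) by (auto intro: min.coboundedI1 min.coboundedI2 INF_lower)
  then have bounds: "L x y - L xs y \<le> gap_sq_bound (gx x y \<bullet> (x - sx)) \<mu>"
    "L x ys - L x y \<le> gap_sq_bound ((- gy x y) \<bullet> (y - sy)) \<mu>"
    using mu_int_f_gap_bound[where f = "\<lambda>x. L x y" and df = "\<lambda>x. gx x y", OF convex_X assms(1) ri(1) xy(1,3) sx \<open>0 < \<mu>\<close>]
      mu_int_f_gap_bound[where f = "\<lambda>y. - L x y" and df = "\<lambda>y. - gy x y", OF convex_Y assms(2) ri(2) xy(2,4) sy \<open>0 < \<mu>\<close>]
    by simp_all
  have gaps: "0 \<le> gx x y \<bullet> (x - sx)" "0 \<le> (- gy x y) \<bullet> (y - sy)"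
    using sx sy xy by (auto simp: inner_diff_right)
  have step: "0 \<le> \<gamma>" "x + \<gamma> *\<^sub>R (sx - x) \<in> X" "y + \<gamma> *\<^sub>R (sy - y) \<in> Y"
    using convexD_alt[OF convex_X xy(1,3)] convexD_alt[OF convex_Y xy(2,4)] assms(8)
    by (auto simp: algebra_simps)
  have gap: "(- rvec gx gy zt) \<bullet> (s - zt) = gx x y \<bullet> (x - sx) + (- gy x y) \<bullet> (y - sy)"
    by (simp add: z rvec_def inner_diff_right)
  then have "1 * (gx x y \<bullet> (x - sx) + (- gy x y) \<bullet> (y - sy))
      \<le> (- rvec gx gy (x, y)) \<bullet> (sx - x, sy - y)"
    by (simp add: z)
  from wgap_descent[OF xy(1,2,3,1,4,2) step \<open>0 < \<mu>\<close> gaps bounds this]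
  show ?thesis
    unfolding gap by (simp add: z \<mu>_def)
qed

lemma PFW_gap_bounds:
  assumes "finite A" "finite B" "X = convex hull A" "Y = convex hull B"
    and "0 < mu_A_L A B L gx gy" "Sx \<subseteq> A" "Sy \<subseteq> B"
    and "\<forall>v\<in>Sx. \<alpha>x v > 0" "sum \<alpha>x Sx = 1" "x = (\<Sum>v\<in>Sx. \<alpha>x v *\<^sub>R v)"
    and "\<forall>v\<in>Sy. \<alpha>y v > 0" "sum \<alpha>y Sy = 1" "y = (\<Sum>v\<in>Sy. \<alpha>y v *\<^sub>R v)"
    and "x \<in> X" "y \<in> Y"
    and "\<forall>x'\<in>X. gx x y \<bullet> sx \<le> gx x y \<bullet> x'" "\<forall>y'\<in>Y. (- gy x y) \<bullet> sy \<le> (- gy x y) \<bullet> y'"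
    and "vx \<in> Sx" "\<forall>v\<in>Sx. gx x y \<bullet> v \<le> gx x y \<bullet> vx"
    and "vy \<in> Sy" "\<forall>v\<in>Sy. (- gy x y) \<bullet> v \<le> (- gy x y) \<bullet> vy"
  shows "L x y - L xs y \<le> gap_sq_bound (gx x y \<bullet> (vx - sx)) (mu_A_L A B L gx gy)"
    "L x ys - L x y \<le> gap_sq_bound ((- gy x y) \<bullet> (vy - sy)) (mu_A_L A B L gx gy)"
    "0 \<le> gx x y \<bullet> (vx - sx)" "0 \<le> (- gy x y) \<bullet> (vy - sy)"
proof -
  have "mu_A_L A B L gx gy \<le> mu_A_f A (\<lambda>x. L x y) (\<lambda>x. gx x y)"
    "mu_A_L A B L gx gy \<le> mu_A_f B (\<lambda>y. - L x y) (\<lambda>y. - gy x y)"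
    unfolding mu_A_L_def using assms(3,4,14,15)
    by (auto intro: min.coboundedI1 min.coboundedI2 INF_lower)
  then show "L x y - L xs y \<le> gap_sq_bound (gx x y \<bullet> (vx - sx)) (mu_A_L A B L gx gy)"
    "L x ys - L x y \<le> gap_sq_bound ((- gy x y) \<bullet> (vy - sy)) (mu_A_L A B L gx gy)"
    using mu_A_f_gap_bound[where f = "\<lambda>x. L x y" and df = "\<lambda>x. gx x y",
        OF assms(1,6,8-10,18,19) _ _ tangent_X, of sx xs]
      mu_A_f_gap_bound[where f = "\<lambda>y. - L x y" and df = "\<lambda>y. - gy x y",
        OF assms(2,7,11-13,20,21) _ _ tangent_Y, of sy ys]
      assms(3,4,5,14-17) saddle_point(1,2)
    by simp_all
  show "0 \<le> gx x y \<bullet> (vx - sx)" "0 \<le> (- gy x y) \<bullet> (vy - sy)"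
    using pairwise_gap_nonneg[OF assms(1,6,8-10,18,19)] pairwise_gap_nonneg[OF assms(2,7,11-13,20,21)]
      assms(3,4,14-17) by simp_all
qed

lemma PFW_step:
  assumes "finite A" "finite B" "X = convex hull A" "Y = convex hull B"
    and "0 < mu_A_L A B L gx gy" "Sx \<subseteq> A" "Sy \<subseteq> B"
    and "\<forall>v\<in>Sx. \<alpha>x v > 0" "sum \<alpha>x Sx = 1" "fst zt = (\<Sum>v\<in>Sx. \<alpha>x v *\<^sub>R v)"
    and "\<forall>v\<in>Sy. \<alpha>y v > 0" "sum \<alpha>y Sy = 1" "snd zt = (\<Sum>v\<in>Sy. \<alpha>y v *\<^sub>R v)"
    and "zt \<in> X \<times> Y" "s \<in> X \<times> Y" "\<forall>s'\<in>X \<times> Y. s \<bullet> rvec gx gy zt \<le> s' \<bullet> rvec gx gy zt"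
    and "(vx, vy) \<in> Sx \<times> Sy" "\<forall>v\<in>Sx \<times> Sy. rvec gx gy zt \<bullet> v \<le> rvec gx gy zt \<bullet> (vx, vy)"
  defines "g \<equiv> (- rvec gx gy zt) \<bullet> (s - zt + (zt - (vx, vy)))"
    and "\<nu> \<equiv> nu_coef (1/2) (M_L X Y L gx gy xs ys) (mu_A_L A B L gx gy)"
  shows "(- rvec gx gy zt) \<bullet> (zt - (vx, vy)) \<le> (- rvec gx gy zt) \<bullet> (s - zt) \<Longrightarrow> \<gamma> \<in> {0..1} \<Longrightarrow>
      wgap L xs ys (zt + \<gamma> *\<^sub>R (s - zt)) \<le> wgap L xs ys zt - \<nu> * \<gamma> * g + \<gamma>\<^sup>2 * C"
    and "(- rvec gx gy zt) \<bullet> (s - zt) \<le> (- rvec gx gy zt) \<bullet> (zt - (vx, vy)) \<Longrightarrow> 0 \<le> \<gamma> \<Longrightarrow>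
      (\<alpha>x vx < 1 \<longrightarrow> \<gamma> \<le> \<alpha>x vx / (1 - \<alpha>x vx)) \<Longrightarrow> (\<alpha>y vy < 1 \<longrightarrow> \<gamma> \<le> \<alpha>y vy / (1 - \<alpha>y vy)) \<Longrightarrow>
      wgap L xs ys (zt + \<gamma> *\<^sub>R (zt - (vx, vy))) \<le> wgap L xs ys zt - \<nu> * \<gamma> * g + \<gamma>\<^sup>2 * C"
proof -
  obtain x y sx sy where z: "zt = (x, y)" "s = (sx, sy)"
    by (cases zt, cases s)
  have xy: "x \<in> X" "y \<in> Y" "sx \<in> X" "sy \<in> Y" "vx \<in> X" "vy \<in> Y"
    using assms(3,4,6,7,14,15,17) z hull_subset[of A convex] hull_subset[of B convex] by auto
  have s_min: "\<forall>x'\<in>X. gx x y \<bullet> sx \<le> gx x y \<bullet> x'" "\<forall>y'\<in>Y. (- gy x y) \<bullet> sy \<le> (- gy x y) \<bullet> y'"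
    using inner_argmin_Times[OF assms(15,16)] z by (simp_all add: rvec_def)
  have "\<forall>v\<in>Sx \<times> Sy. (vx, vy) \<bullet> (- rvec gx gy zt) \<le> v \<bullet> (- rvec gx gy zt)"
    using assms(18) by (simp add: inner_commute)
  from inner_argmin_Times[OF assms(17) this]
  have v_max: "\<forall>v\<in>Sx. gx x y \<bullet> v \<le> gx x y \<bullet> vx" "\<forall>v\<in>Sy. (- gy x y) \<bullet> v \<le> (- gy x y) \<bullet> vy"
    using z by (simp_all add: rvec_def inner_commute)
  have repr: "x = (\<Sum>v\<in>Sx. \<alpha>x v *\<^sub>R v)" "y = (\<Sum>v\<in>Sy. \<alpha>y v *\<^sub>R v)"
    using assms(10,13) z by simp_all
  have vS: "vx \<in> Sx" "vy \<in> Sy"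
    using assms(17) by simp_all
  note bounds = PFW_gap_bounds[OF assms(1-9) repr(1) assms(11,12) repr(2) xy(1,2) s_min
      vS(1) v_max(1) vS(2) v_max(2)]
  have g: "g = gx x y \<bullet> (vx - sx) + (- gy x y) \<bullet> (vy - sy)"
    by (simp add: g_def z rvec_def inner_diff_right)
  have g_split: "g = (- rvec gx gy zt) \<bullet> (s - zt) + (- rvec gx gy zt) \<bullet> (zt - (vx, vy))"
    unfolding g_def by (rule inner_add_right)
  have descent: "wgap L xs ys ((x, y) + \<gamma> *\<^sub>R (s1 - v1, s2 - v2)) \<le> wgap L xs ys (x, y) - \<nu> * \<gamma> * g + \<gamma>\<^sup>2 * C"
    if "s1 \<in> X" "v1 \<in> X" "s2 \<in> Y" "v2 \<in> Y" "0 \<le> \<gamma>"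
      "x + \<gamma> *\<^sub>R (s1 - v1) \<in> X" "y + \<gamma> *\<^sub>R (s2 - v2) \<in> Y"
      "g \<le> 2 * ((- rvec gx gy (x, y)) \<bullet> (s1 - v1, s2 - v2))" for s1 v1 s2 v2 \<gamma>
    using wgap_descent[OF xy(1,2) that(1-7) assms(5) bounds(3,4,1,2), of "1/2"] that(8)
    unfolding \<nu>_def g by simp
  show "wgap L xs ys (zt + \<gamma> *\<^sub>R (s - zt)) \<le> wgap L xs ys zt - \<nu> * \<gamma> * g + \<gamma>\<^sup>2 * C"
    if "(- rvec gx gy zt) \<bullet> (zt - (vx, vy)) \<le> (- rvec gx gy zt) \<bullet> (s - zt)" "\<gamma> \<in> {0..1}"
  proof -
    have "x + \<gamma> *\<^sub>R (sx - x) \<in> X" "y + \<gamma> *\<^sub>R (sy - y) \<in> Y"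
      using convexD_alt[OF convex_X xy(1,3)] convexD_alt[OF convex_Y xy(2,4)] that(2)
      by (auto simp: algebra_simps)
    with descent[OF xy(3,1,4,2)] that g_split show ?thesis
      by (simp add: z)
  qed
  show "wgap L xs ys (zt + \<gamma> *\<^sub>R (zt - (vx, vy))) \<le> wgap L xs ys zt - \<nu> * \<gamma> * g + \<gamma>\<^sup>2 * C"
    if "(- rvec gx gy zt) \<bullet> (s - zt) \<le> (- rvec gx gy zt) \<bullet> (zt - (vx, vy))" "0 \<le> \<gamma>"
      "\<alpha>x vx < 1 \<longrightarrow> \<gamma> \<le> \<alpha>x vx / (1 - \<alpha>x vx)" "\<alpha>y vy < 1 \<longrightarrow> \<gamma> \<le> \<alpha>y vy / (1 - \<alpha>y vy)"
  proof -
    have "x + \<gamma> *\<^sub>R (x - vx) \<in> X" "y + \<gamma> *\<^sub>R (y - vy) \<in> Y"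
      using convex_hull_away_step[OF assms(8,9) _ _ that(2,3)] hull_mono[OF assms(6)]
        convex_hull_away_step[OF assms(11,12) _ _ that(2,4)] hull_mono[OF assms(7)]
        assms(3,4,10,13,17) z by auto
    with descent[OF xy(1,5,2,6)] that g_split show ?thesis
      by (simp add: z)
  qed
qed

end

theorem lemma20:
  fixes X :: "'a::euclidean_space set" and Y :: "'b::euclidean_space set"
    and L :: "'a \<Rightarrow> 'b \<Rightarrow> real"
    and gx :: "'a \<Rightarrow> 'b \<Rightarrow> 'a" and gy :: "'a \<Rightarrow> 'b \<Rightarrow> 'b"
    and \<mu>X \<mu>Y :: real and xs :: 'a and ys :: 'b and zt :: "'a \<times> 'b"
  assumes "X \<noteq> {}" and "Y \<noteq> {}" and "convex X" and "convex Y" and "compact X" and "compact Y"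
    and deriv: "\<And>x y. x \<in> X \<Longrightarrow> y \<in> Y \<Longrightarrow>
        ((\<lambda>z. L (fst z) (snd z)) has_derivative (\<lambda>h. gx x y \<bullet> fst h + gy x y \<bullet> snd h)) (at (x, y))"
    and "\<mu>X > 0" and "\<mu>Y > 0"
    and "\<And>y. y \<in> Y \<Longrightarrow> sconvex_on \<mu>X X (\<lambda>x. L x y)"
    and "\<And>x. x \<in> X \<Longrightarrow> sconvex_on \<mu>Y Y (\<lambda>y. - L x y)"
    and "is_saddle X Y L xs ys"
    and "C_L X Y L gx gy < \<infinity>"
    and "M_L X Y L gx gy xs ys < \<infinity>"
    and "zt \<in> X \<times> Y"
  shows
    "((xs, ys) \<in> rel_interior (X \<times> Y) \<and> mu_int_L X Y L gx gy xs ys > 0 \<longrightarrow>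
       (\<forall>s. s \<in> X \<times> Y \<and> (\<forall>s'\<in>X \<times> Y. s \<bullet> rvec gx gy zt \<le> s' \<bullet> rvec gx gy zt) \<longrightarrow>
          (\<forall>\<gamma>\<in>{0..1}.
             wgap L xs ys (zt + \<gamma> *\<^sub>R (s - zt))
               \<le> wgap L xs ys zt
                  - nu_coef 1 (M_L X Y L gx gy xs ys) (mu_int_L X Y L gx gy xs ys) * \<gamma>
                      * ((- rvec gx gy zt) \<bullet> (s - zt))
                  + \<gamma>\<^sup>2 * real_of_ereal (C_L X Y L gx gy))))
     \<and>
     (\<forall>A B Sx Sy (\<alpha>x :: 'a \<Rightarrow> real) (\<alpha>y :: 'b \<Rightarrow> real) s vx vy.
        finite A \<and> finite B \<and> X = convex hull A \<and> Y = convex hull B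
        \<and> mu_A_L A B L gx gy > 0
        \<and> Sx \<subseteq> A \<and> Sy \<subseteq> B
        \<and> (\<forall>v\<in>Sx. \<alpha>x v > 0) \<and> sum \<alpha>x Sx = 1 \<and> fst zt = (\<Sum>v\<in>Sx. \<alpha>x v *\<^sub>R v)
        \<and> (\<forall>v\<in>Sy. \<alpha>y v > 0) \<and> sum \<alpha>y Sy = 1 \<and> snd zt = (\<Sum>v\<in>Sy. \<alpha>y v *\<^sub>R v)
        \<and> s \<in> X \<times> Y \<and> (\<forall>s'\<in>X \<times> Y. s \<bullet> rvec gx gy zt \<le> s' \<bullet> rvec gx gy zt)
        \<and> (vx, vy) \<in> Sx \<times> Sy \<and> (\<forall>v\<in>Sx \<times> Sy. rvec gx gy zt \<bullet> v \<le> rvec gx gy zt \<bullet> (vx, vy))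
        \<longrightarrow>
        (let r = rvec gx gy zt; dFW = s - zt; dA = zt - (vx, vy);
             \<nu> = nu_coef (1/2) (M_L X Y L gx gy xs ys) (mu_A_L A B L gx gy);
             g = (- r) \<bullet> (dFW + dA); C = real_of_ereal (C_L X Y L gx gy)
         in ((- r) \<bullet> dFW \<ge> (- r) \<bullet> dA \<longrightarrow>
               (\<forall>\<gamma>\<in>{0..1}. wgap L xs ys (zt + \<gamma> *\<^sub>R dFW) \<le> wgap L xs ys zt - \<nu> * \<gamma> * g + \<gamma>\<^sup>2 * C))
          \<and> (\<not> (- r) \<bullet> dFW \<ge> (- r) \<bullet> dA \<longrightarrow>
               (\<forall>\<gamma>. 0 \<le> \<gamma> \<and> (\<alpha>x vx < 1 \<longrightarrow> \<gamma> \<le> \<alpha>x vx / (1 - \<alpha>x vx))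
                        \<and> (\<alpha>y vy < 1 \<longrightarrow> \<gamma> \<le> \<alpha>y vy / (1 - \<alpha>y vy)) \<longrightarrow>
                  wgap L xs ys (zt + \<gamma> *\<^sub>R dA) \<le> wgap L xs ys zt - \<nu> * \<gamma> * g + \<gamma>\<^sup>2 * C))))"
proof -
  interpret sc_saddle_problem X Y L gx gy \<mu>X \<mu>Y xs ys
    by unfold_locales (use assms in auto)
  show ?thesis
    unfolding Let_def
    apply (intro conjI impI allI ballI; elim conjE)
    subgoal
      by (rule FW_step_interior[OF assms(5,6) _ _ assms(15)])
    subgoal for A B Sx Sy \<alpha>x \<alpha>y s vx vy \<gamma>
      by (rule PFW_step(1)[where A = A and B = B and Sx = Sx and Sy = Sy and \<alpha>x = \<alpha>x and \<alpha>y = \<alpha>y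
            and s = s and vx = vx and vy = vy and zt = zt]) (use assms(15) in simp_all)
    subgoal for A B Sx Sy \<alpha>x \<alpha>y s vx vy \<gamma>
      by (rule PFW_step(2)[where A = A and B = B and Sx = Sx and Sy = Sy and \<alpha>x = \<alpha>x and \<alpha>y = \<alpha>y
            and s = s and vx = vx and vy = vy and zt = zt]) (use assms(15) in simp_all)
    done
qed

end
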